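(* Let $T>0$, $m_0\in\mathbb R$, let $l:[0,T]\to[0,\infty)$ be continuous and nondecreasing, and let $b:\mathbb R\times[0,\infty)\times[0,T]\to\mathbb R$ be continuous and $L_m$-Lipschitz in its first argument with $L_m\in(0,1)$. For $w\in C[0,T]$ let $M(w)_t=m_0\wedge\inf_{0\le r\le t}w_r$. Then for every $x\in C[0,T]$ the equation $$w_t=x_t-\sup_{s\le t}\big(x_s-b(M(w)_s,l_s,s)\big)^+,\qquad t\in[0,T],$$ has a unique solution $w=\Gamma(x)\in C[0,T]$, and for all $x,x'\in C[0,T]$, $$\|\Gamma(x)-\Gamma(x')\|_\infty\le\frac{2}{1-L_m}\|x-x'\|_\infty.$$
   Context: $C[0,T]$ denotes the space of real continuous functions on $[0,T]$ with the supremum norm $\|\cdot\|_\infty$; $(z)^+=\max(z,0)$. *)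

theory Defs
  imports "HOL-Analysis.Analysis"
begin

text \<open>Functions in C[0,T] are represented as real => real, only values on {0..T} matter.\<close>

definition supnorm :: "real \<Rightarrow> (real \<Rightarrow> real) \<Rightarrow> real" where
  "supnorm T f = (SUP t\<in>{0..T}. \<bar>f t\<bar>)"

definition runmin :: "real \<Rightarrow> (real \<Rightarrow> real) \<Rightarrow> real \<Rightarrow> real" where
  "runmin m0 w t = min m0 (INF r\<in>{0..t}. w r)"

definition solves_eq ::
  "real \<Rightarrow> real \<Rightarrow> (real \<Rightarrow> real \<Rightarrow> real \<Rightarrow> real) \<Rightarrow> (real \<Rightarrow> real)
     \<Rightarrow> (real \<Rightarrow> real) \<Rightarrow> (real \<Rightarrow> real) \<Rightarrow> bool" where
  "solves_eq T m0 b l x w \<longleftrightarrow>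
     (\<forall>t\<in>{0..T}. w t = x t - (SUP s\<in>{0..t}. max (x s - b (runmin m0 w s) (l s) s) 0))"

end

theory Submission
  imports Defs
begin

text \<open>For fixed \<open>x\<close>, the map \<open>w \<mapsto> \<Phi>(x, w)\<close> given by the right-hand side of the equation is a
  contraction in the sup norm: running infima and running suprema are 1-Lipschitz, and \<open>b\<close> is
  \<open>L\<^sub>m\<close>-Lipschitz in \<open>m\<close>. More precisely
  \<open>\<parallel>\<Phi>(x, w) - \<Phi>(x', w')\<parallel> \<le> 2\<parallel>x - x'\<parallel> + L\<^sub>m\<parallel>w - w'\<parallel>\<close>, where one \<open>\<parallel>x - x'\<parallel>\<close> comes from the
  leading \<open>x\<^sub>t\<close> and one from the reflection term. Banach's fixed point theorem, applied in the
  space of bounded continuous functions (paths on \<open>[0,T]\<close> extended constantly), gives a solution;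
  applying the estimate to two solutions gives
  \<open>\<parallel>w - w'\<parallel> \<le> 2/(1 - L\<^sub>m) \<parallel>x - x'\<parallel>\<close>, which for \<open>x = x'\<close> is uniqueness.\<close>

lemma bdd_image_subset_Icc:
  fixes f :: "real \<Rightarrow> real"
  assumes "continuous_on {a..b} f" "A \<subseteq> {a..b}"
  shows "bdd_above (f ` A)" and "bdd_below (f ` A)"
proof -
  have "bounded (f ` {a..b})"
    using compact_continuous_image[OF assms(1) compact_Icc] by (rule compact_imp_bounded)
  then have "bounded (f ` A)"
    by (rule bounded_subset) (use assms(2) in auto)
  then show "bdd_above (f ` A)" "bdd_below (f ` A)"
    by (auto intro: bounded_imp_bdd_above bounded_imp_bdd_below)
qed

lemma cSUP_abs_diff_le:
  fixes f g :: "'a \<Rightarrow> real"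
  assumes "A \<noteq> {}" "bdd_above (f ` A)" "bdd_above (g ` A)"
    and "\<And>s. s \<in> A \<Longrightarrow> \<bar>f s - g s\<bar> \<le> K"
  shows "\<bar>(SUP s\<in>A. f s) - (SUP s\<in>A. g s)\<bar> \<le> K"
proof -
  have SUP_le: "(SUP s\<in>A. u s) \<le> (SUP s\<in>A. v s) + K"
    if "bdd_above (v ` A)" "\<And>s. s \<in> A \<Longrightarrow> u s \<le> v s + K" for u v :: "'a \<Rightarrow> real"
  proof (rule cSUP_least[OF \<open>A \<noteq> {}\<close>])
    fix s assume "s \<in> A"
    then have "v s \<le> (SUP s\<in>A. v s)" using that(1) by (rule cSUP_upper)
    then show "u s \<le> (SUP s\<in>A. v s) + K" using that(2)[OF \<open>s \<in> A\<close>] by linarith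
  qed
  have "(SUP s\<in>A. f s) \<le> (SUP s\<in>A. g s) + K" "(SUP s\<in>A. g s) \<le> (SUP s\<in>A. f s) + K"
    using assms(4) by (force intro: SUP_le assms(2,3))+
  then show ?thesis by linarith
qed

lemma INF_real_eq_uminus_SUP: "(INF s\<in>A. f s) = - (SUP s\<in>A. - f s :: real)"
  by (simp add: Inf_real_def image_image)

lemma cINF_abs_diff_le:
  fixes f g :: "'a \<Rightarrow> real"
  assumes "A \<noteq> {}" "bdd_below (f ` A)" "bdd_below (g ` A)"
    and "\<And>s. s \<in> A \<Longrightarrow> \<bar>f s - g s\<bar> \<le> K"
  shows "\<bar>(INF s\<in>A. f s) - (INF s\<in>A. g s)\<bar> \<le> K"
proof -
  have "bdd_above ((\<lambda>s. - f s) ` A)" "bdd_above ((\<lambda>s. - g s) ` A)"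
    using assms(2,3) bdd_above_uminus[of "f ` A"] bdd_above_uminus[of "g ` A"]
    by (simp_all add: image_image)
  then have "\<bar>(SUP s\<in>A. - f s) - (SUP s\<in>A. - g s)\<bar> \<le> K"
    using assms(4) by (intro cSUP_abs_diff_le[OF assms(1)]) (auto simp: abs_minus_commute)
  then show ?thesis
    unfolding INF_real_eq_uminus_SUP by linarith
qed

lemma SUP_Icc_eq_SUP_min:
  fixes t :: real
  assumes "t \<in> {a..b}"
  shows "(SUP s\<in>{a..t}. f s) = (SUP s\<in>{a..b}. f (min s t))"
proof -
  have "(\<lambda>s. min s t) ` {a..b} = {a..t}"
    using assms by (force simp: image_iff)
  then show ?thesis by (metis image_image)
qed

text \<open>Writing the running supremum as a supremum over the fixed interval \<open>[a,b]\<close> of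
  \<open>f (min s t)\<close> reduces its continuity to the uniform continuity of \<open>f\<close>.\<close>

lemma continuous_on_running_SUP:
  fixes f :: "real \<Rightarrow> real"
  assumes f: "continuous_on {a..b} f"
  shows "continuous_on {a..b} (\<lambda>t. SUP s\<in>{a..t}. f s)"
  unfolding continuous_on_iff
proof (intro ballI allI impI)
  fix t e :: real assume t: "t \<in> {a..b}" and "0 < e"
  obtain d where "d > 0" and d: "\<And>s s'. s \<in> {a..b} \<Longrightarrow> s' \<in> {a..b} \<Longrightarrow> dist s' s < d \<Longrightarrow>
      dist (f s') (f s) < e / 2"
    using compact_uniformly_continuous[OF f compact_Icc] \<open>0 < e\<close>
    unfolding uniformly_continuous_on_def by (metis half_gt_zero)
  have bdd: "bdd_above ((\<lambda>s. f (min s u)) ` {a..b})" if "u \<in> {a..b}" for u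
    by (rule bdd_above_mono[OF bdd_image_subset_Icc(1)[OF f order_refl]]) (use that in auto)
  have "dist (SUP s\<in>{a..t'}. f s) (SUP s\<in>{a..t}. f s) < e"
    if t': "t' \<in> {a..b}" "dist t' t < d" for t'
  proof -
    have "\<bar>(SUP s\<in>{a..b}. f (min s t')) - (SUP s\<in>{a..b}. f (min s t))\<bar> \<le> e / 2"
    proof (rule cSUP_abs_diff_le)
      fix s assume "s \<in> {a..b}"
      then have "min s t \<in> {a..b}" "min s t' \<in> {a..b}"
        using t t' by auto
      moreover have "dist (min s t') (min s t) < d"
        using t'(2) by (simp add: dist_real_def)
      ultimately show "\<bar>f (min s t') - f (min s t)\<bar> \<le> e / 2"
        using d[of "min s t" "min s t'"] by (simp add: dist_real_def)
    qed (use t t' bdd in auto)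
    then show ?thesis
      unfolding dist_real_def SUP_Icc_eq_SUP_min[OF t] SUP_Icc_eq_SUP_min[OF t'(1)]
      using \<open>0 < e\<close> by linarith
  qed
  then show "\<exists>d>0. \<forall>t'\<in>{a..b}. dist t' t < d \<longrightarrow>
      dist (SUP s\<in>{a..t'}. f s) (SUP s\<in>{a..t}. f s) < e"
    using \<open>d > 0\<close> by blast
qed

lemma continuous_on_running_INF:
  fixes f :: "real \<Rightarrow> real"
  assumes "continuous_on {a..b} f"
  shows "continuous_on {a..b} (\<lambda>t. INF s\<in>{a..t}. f s)"
  unfolding INF_real_eq_uminus_SUP
  by (intro continuous_on_minus continuous_on_running_SUP assms)

lemma continuous_on_runmin:
  assumes "continuous_on {0..T} w"
  shows "continuous_on {0..T} (runmin m0 w)"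
  unfolding runmin_def by (intro continuous_intros continuous_on_running_INF assms)

lemma runmin_abs_diff_le:
  assumes "continuous_on {0..T} w" "continuous_on {0..T} w'" "s \<in> {0..T}"
    and "\<And>r. r \<in> {0..s} \<Longrightarrow> \<bar>w r - w' r\<bar> \<le> K"
  shows "\<bar>runmin m0 w s - runmin m0 w' s\<bar> \<le> K"
proof -
  have sub: "{0..s} \<subseteq> {0..T}"
    using assms(3) by auto
  have "\<bar>(INF r\<in>{0..s}. w r) - (INF r\<in>{0..s}. w' r)\<bar> \<le> K"
    by (rule cINF_abs_diff_le[OF _ bdd_image_subset_Icc(2)[OF assms(1) sub]
          bdd_image_subset_Icc(2)[OF assms(2) sub]]) (use assms in auto)
  then show ?thesis
    unfolding runmin_def by linarith
qed

lemma abs_le_supnorm: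
  assumes "continuous_on {0..T} f" "t \<in> {0..T}"
  shows "\<bar>f t\<bar> \<le> supnorm T f"
proof -
  have "bdd_above ((\<lambda>t. \<bar>f t\<bar>) ` {0..T})"
    by (rule bdd_image_subset_Icc(1)[OF _ order_refl]) (intro continuous_intros assms(1))
  then show ?thesis
    unfolding supnorm_def using assms(2) by (rule cSUP_upper2) simp
qed

lemma supnorm_le:
  assumes "0 \<le> T" "\<And>t. t \<in> {0..T} \<Longrightarrow> \<bar>f t\<bar> \<le> K"
  shows "supnorm T f \<le> K"
  unfolding supnorm_def using assms by (intro cSUP_least) auto

definition reflection_map ::
  "real \<Rightarrow> (real \<Rightarrow> real \<Rightarrow> real \<Rightarrow> real) \<Rightarrow> (real \<Rightarrow> real) \<Rightarrow> (real \<Rightarrow> real)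
     \<Rightarrow> (real \<Rightarrow> real) \<Rightarrow> real \<Rightarrow> real" where
  "reflection_map m0 b l x w t =
     x t - (SUP s\<in>{0..t}. max (x s - b (runmin m0 w s) (l s) s) 0)"

lemma solves_eq_iff_fixed_point:
  "solves_eq T m0 b l x w \<longleftrightarrow> (\<forall>t\<in>{0..T}. w t = reflection_map m0 b l x w t)"
  unfolding solves_eq_def reflection_map_def ..

locale reflected_equation =
  fixes T m0 Lm :: real and l :: "real \<Rightarrow> real"
    and b :: "real \<Rightarrow> real \<Rightarrow> real \<Rightarrow> real"
  assumes T_nonneg: "0 \<le> T"
    and l_cont: "continuous_on {0..T} l"
    and l_nonneg: "\<And>t. t \<in> {0..T} \<Longrightarrow> 0 \<le> l t"
    and b_cont: "continuous_on (UNIV \<times> {0..} \<times> {0..T}) (\<lambda>(m, y, s). b m y s)"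
    and Lm_nonneg: "0 \<le> Lm" and Lm_less_1: "Lm < 1"
    and b_lipschitz: "\<And>m m' y s. 0 \<le> y \<Longrightarrow> s \<in> {0..T} \<Longrightarrow>
      \<bar>b m y s - b m' y s\<bar> \<le> Lm * \<bar>m - m'\<bar>"
begin

lemma continuous_on_barrier:
  assumes "continuous_on {0..T} w"
  shows "continuous_on {0..T} (\<lambda>s. b (runmin m0 w s) (l s) s)"
proof -
  have "continuous_on {0..T} (\<lambda>s. (\<lambda>(m, y, s). b m y s) (runmin m0 w s, l s, s))"
    by (rule continuous_on_compose2[OF b_cont])
      (auto intro!: continuous_intros continuous_on_runmin assms l_cont l_nonneg)
  then show ?thesis by simp
qed

lemma continuous_on_reflection_map:
  assumes "continuous_on {0..T} w" "continuous_on {0..T} x"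
  shows "continuous_on {0..T} (reflection_map m0 b l x w)"
  unfolding reflection_map_def
  by (intro continuous_intros continuous_on_running_SUP continuous_on_barrier assms)

lemma reflection_map_abs_diff_le:
  assumes w: "continuous_on {0..T} w" and w': "continuous_on {0..T} w'"
    and x: "continuous_on {0..T} x" and x': "continuous_on {0..T} x'"
    and K: "\<And>r. r \<in> {0..T} \<Longrightarrow> \<bar>w r - w' r\<bar> \<le> K"
    and D: "\<And>r. r \<in> {0..T} \<Longrightarrow> \<bar>x r - x' r\<bar> \<le> D"
    and t: "t \<in> {0..T}"
  shows "\<bar>reflection_map m0 b l x w t - reflection_map m0 b l x' w' t\<bar> \<le> 2 * D + Lm * K"
proof -
  let ?g = "\<lambda>x w s. max (x s - b (runmin m0 w s) (l s) s) 0"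
  have "\<bar>?g x w s - ?g x' w' s\<bar> \<le> D + Lm * K" if s: "s \<in> {0..T}" for s
  proof -
    have "\<bar>b (runmin m0 w s) (l s) s - b (runmin m0 w' s) (l s) s\<bar>
        \<le> Lm * \<bar>runmin m0 w s - runmin m0 w' s\<bar>"
      using b_lipschitz l_nonneg s by blast
    also have "\<dots> \<le> Lm * K"
      using runmin_abs_diff_le[OF w w' s, of K] K s Lm_nonneg
      by (intro mult_left_mono) auto
    finally show ?thesis
      using D[OF s] by (simp add: abs_le_iff max_def)
  qed
  then have "\<bar>(SUP s\<in>{0..t}. ?g x w s) - (SUP s\<in>{0..t}. ?g x' w' s)\<bar> \<le> D + Lm * K"
    using t by (intro cSUP_abs_diff_le bdd_image_subset_Icc(1)[where a=0 and b=T]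
        continuous_intros continuous_on_barrier w w' x x') auto
  then show ?thesis
    unfolding reflection_map_def using D[OF t] by linarith
qed

lemma solution_exists:
  assumes x: "continuous_on {0..T} x"
  shows "\<exists>w. continuous_on {0..T} w \<and> solves_eq T m0 b l x w"
proof -
  have "\<exists>h. \<forall>t. apply_bcontfun h t = reflection_map m0 b l x (apply_bcontfun g) (clamp 0 T t)"
    for g :: "real \<Rightarrow>\<^sub>C real"
    using continuous_on_cbox_bcontfunE[of 0 T "reflection_map m0 b l x (apply_bcontfun g)"]
      continuous_on_reflection_map[OF _ x]
    by (metis box_real(2) continuous_on_apply_bcontfun)
  then obtain F where F: "\<And>g t. apply_bcontfun (F g) t =
      reflection_map m0 b l x (apply_bcontfun g) (clamp 0 T t)"
    by metis
  have "dist (F g) (F g') \<le> Lm * dist g g'" for g g'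
  proof (rule dist_bound)
    fix t
    have "clamp 0 T t \<in> {0..T}"
      using clamp_in_interval[of 0 T t] T_nonneg by simp
    then show "dist (F g t) (F g' t) \<le> Lm * dist g g'"
      using reflection_map_abs_diff_le[OF _ _ x x, of "apply_bcontfun g" "apply_bcontfun g'"
          "dist g g'" 0]
      by (simp add: F dist_real_def dist_bounded[of g _ g', unfolded dist_real_def])
  qed
  then obtain g where "F g = g"
    using banach_fix_type[of Lm F] Lm_nonneg Lm_less_1 by blast
  then have "\<forall>t\<in>{0..T}. g t = reflection_map m0 b l x (apply_bcontfun g) t"
    using F[of g] by (metis box_real(2) clamp_cancel_cbox)
  then show ?thesis
    unfolding solves_eq_iff_fixed_point using continuous_on_apply_bcontfun by blast
qed

lemma solutions_supnorm_le:
  assumes w: "continuous_on {0..T} w" "solves_eq T m0 b l x w"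
    and w': "continuous_on {0..T} w'" "solves_eq T m0 b l x' w'"
    and x: "continuous_on {0..T} x" and x': "continuous_on {0..T} x'"
  shows "supnorm T (\<lambda>t. w t - w' t) \<le> 2 / (1 - Lm) * supnorm T (\<lambda>t. x t - x' t)"
proof -
  let ?K = "supnorm T (\<lambda>t. w t - w' t)" and ?D = "supnorm T (\<lambda>t. x t - x' t)"
  have "?K \<le> 2 * ?D + Lm * ?K"
  proof (rule supnorm_le[OF T_nonneg])
    fix t assume t: "t \<in> {0..T}"
    have "continuous_on {0..T} (\<lambda>t. w t - w' t)" "continuous_on {0..T} (\<lambda>t. x t - x' t)"
      using w(1) w'(1) x x' by (auto intro: continuous_on_diff)
    then have "\<bar>reflection_map m0 b l x w t - reflection_map m0 b l x' w' t\<bar> \<le> 2 * ?D + Lm * ?K"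
      by (intro reflection_map_abs_diff_le[OF w(1) w'(1) x x' _ _ t] abs_le_supnorm)
    then show "\<bar>w t - w' t\<bar> \<le> 2 * ?D + Lm * ?K"
      using w(2) w'(2) t unfolding solves_eq_iff_fixed_point by metis
  qed
  then have "(1 - Lm) * ?K \<le> 2 * ?D"
    by (simp add: algebra_simps)
  then show ?thesis
    using Lm_less_1 by (simp add: pos_le_divide_eq mult.commute)
qed

lemma solution_unique:
  assumes "continuous_on {0..T} w" "solves_eq T m0 b l x w"
    and "continuous_on {0..T} w'" "solves_eq T m0 b l x w'"
    and "continuous_on {0..T} x" "t \<in> {0..T}"
  shows "w t = w' t"
proof -
  have "\<bar>w t - w' t\<bar> \<le> supnorm T (\<lambda>t. w t - w' t)"
    using abs_le_supnorm[OF continuous_on_diff[OF assms(1,3)] assms(6)] .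
  also have "\<dots> \<le> 2 / (1 - Lm) * supnorm T (\<lambda>t. x t - x t)"
    using solutions_supnorm_le[OF assms(1-5) assms(5)] .
  also have "\<dots> = 0"
    unfolding supnorm_def using T_nonneg by simp
  finally show ?thesis by simp
qed

end

theorem mainTheorem8:
  fixes T m0 Lm :: real and l :: "real \<Rightarrow> real"
    and b :: "real \<Rightarrow> real \<Rightarrow> real \<Rightarrow> real"
  assumes "T > 0"
    and "continuous_on {0..T} l" and "mono_on {0..T} l" and "\<forall>t\<in>{0..T}. l t \<ge> 0"
    and "continuous_on (UNIV \<times> {0..} \<times> {0..T}) (\<lambda>(m, y, s). b m y s)"
    and "0 < Lm" and "Lm < 1"
    and "\<forall>m m' y s. y \<ge> 0 \<longrightarrow> s \<in> {0..T} \<longrightarrow> \<bar>b m y s - b m' y s\<bar> \<le> Lm * \<bar>m - m'\<bar>"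
  shows "\<exists>\<Gamma>. (\<forall>x. continuous_on {0..T} x \<longrightarrow>
              continuous_on {0..T} (\<Gamma> x) \<and> solves_eq T m0 b l x (\<Gamma> x) \<and>
              (\<forall>w. continuous_on {0..T} w \<and> solves_eq T m0 b l x w \<longrightarrow>
                   (\<forall>t\<in>{0..T}. w t = \<Gamma> x t)))
          \<and> (\<forall>x x'. continuous_on {0..T} x \<and> continuous_on {0..T} x' \<longrightarrow>
              supnorm T (\<lambda>t. \<Gamma> x t - \<Gamma> x' t) \<le> 2 / (1 - Lm) * supnorm T (\<lambda>t. x t - x' t))"
proof -
  interpret reflected_equation T m0 Lm l b
    using assms by unfold_locales auto
  define \<Gamma> where "\<Gamma> x = (SOME w. continuous_on {0..T} w \<and> solves_eq T m0 b l x w)" for x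
  have \<Gamma>: "continuous_on {0..T} (\<Gamma> x) \<and> solves_eq T m0 b l x (\<Gamma> x)"
    if "continuous_on {0..T} x" for x
    unfolding \<Gamma>_def using solution_exists[OF that] by (rule someI_ex)
  have "w t = \<Gamma> x t"
    if "continuous_on {0..T} x" "continuous_on {0..T} w" "solves_eq T m0 b l x w" "t \<in> {0..T}"
    for x w t
    using \<Gamma>[OF that(1)] solution_unique[OF that(2,3) _ _ that(1,4)] by blast
  moreover have "supnorm T (\<lambda>t. \<Gamma> x t - \<Gamma> x' t) \<le> 2 / (1 - Lm) * supnorm T (\<lambda>t. x t - x' t)"
    if "continuous_on {0..T} x" "continuous_on {0..T} x'" for x x'
    using \<Gamma>[OF that(1)] \<Gamma>[OF that(2)] solutions_supnorm_le[OF _ _ _ _ that] by blast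
  ultimately show ?thesis
    using \<Gamma> by (intro exI[of _ \<Gamma>]) blast
qed

end
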